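(* Let $\beta>2$. There is an absolute constant $C<\infty$ such that for every integer $N\ge1$, every $\theta\in[0,\pi)$ and every $K\ge1$ with $$\big|\{s\in\mathbb R: f^*_{N,\theta}(s)\ge K\}\big|\ge K^{-\beta},$$ one has $$\big|\operatorname{proj}_\theta(\mathcal G_{N\lceil K^\beta\rceil})\big|\le \frac{C}{K}.$$
   Context: For $n\ge 0$ and $\alpha\in\{-1,0,1\}^n$ let $z_\alpha=\sum_{k=1}^n 3^{-k}e^{i\pi(\frac12+\frac23\alpha_k)}$ and $\mathcal G_n=\bigcup_{\alpha\in\{-1,0,1\}^n}B(z_\alpha,3^{-n})$, $B(w,r)$ the open disc. $\operatorname{proj}_\theta(w)=\operatorname{Re}(we^{-i\theta})$. The projection multiplicity function is $f_{n,\theta}(s)=\#\{\alpha\in\{-1,0,1\}^n:\ |\operatorname{proj}_\theta(z_\alpha)-s|<3^{-n}\}$, and $f^*_{N,\theta}(s)=\max_{0\le n\le N}f_{n,\theta}(s)$. $|\cdot|$ is Lebesgue measure. *)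

theory Defs
  imports "HOL-Analysis.Analysis"
begin

text \<open>Digit sequences alpha in {-1,0,1}^n, represented as functions nat => int
  supported on {1..n} (value 0 outside), so that the set is finite and
  in bijection with {-1,0,1}^n.\<close>
definition Alph :: "nat \<Rightarrow> (nat \<Rightarrow> int) set" where
  "Alph n = {a. (\<forall>k\<in>{1..n}. a k \<in> {-1,0,1}) \<and> (\<forall>k. k \<notin> {1..n} \<longrightarrow> a k = 0)}"

definition zpt :: "nat \<Rightarrow> (nat \<Rightarrow> int) \<Rightarrow> complex" where
  "zpt n a = (\<Sum>k=1..n. complex_of_real (3 powi (- int k)) *
      exp (\<i> * complex_of_real (pi * (1/2 + 2/3 * real_of_int (a k)))))"

definition Gset :: "nat \<Rightarrow> complex set" where
  "Gset n = (\<Union>a\<in>Alph n. ball (zpt n a) (3 powi (- int n)))"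

definition proj :: "real \<Rightarrow> complex \<Rightarrow> real" where
  "proj \<theta> w = Re (w * exp (- \<i> * complex_of_real \<theta>))"

definition fmult :: "nat \<Rightarrow> real \<Rightarrow> real \<Rightarrow> nat" where
  "fmult n \<theta> s = card {a\<in>Alph n. \<bar>proj \<theta> (zpt n a) - s\<bar> < 3 powi (- int n)}"

definition fstar :: "nat \<Rightarrow> real \<Rightarrow> real \<Rightarrow> nat" where
  "fstar N \<theta> s = Max {fmult n \<theta> s | n. n \<le> N}"

end

theory Submission
  imports Defs
begin

(*
  Write P(r) for the projection
  proj_theta(G_r); it is the union of the intervals of radius 3^-r around the
  projected points proj_theta(z_a), a in {-1,0,1}^r, and it is self-similar:
  P(N + r) is covered by the 3^N affine copies  proj_theta(z_g) + 3^-N P(r),  g of length N.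

  Call a pair (n, s) with n <= N heavy if at least K words of length n project into
  the interval of radius 3^-n around s.  A heavy pair forces all extensions of its
  K words to length N to have their copies inside the interval of radius 2 * 3^-n
  around s.  For a family of heavy pairs whose doubled intervals are disjoint, with
  sigma = sum 3^-n, this gives the one-step decay
      |P(N + r)| <= |P(r)| - (K |P(r)| - 4) sigma.
  The superlevel set {f*_N >= K} is covered by the doubled intervals of all heavy
  pairs (each of its points is the centre of one), so the Vitali covering lemma yields such a family with 20 sigma at least
  |{f*_N >= K}| >= K^-beta.  Iterating the decay ceil(K^beta) times, starting from
  |P(0)| <= 2, forces K |P(N ceil(K^beta))| <= 80.  So C = 80 works; the argument does
  not need the restrictions N >= 1, 0 <= theta < pi or beta > 2.
*)

text \<open>The radii 3 powi (-n) of the definitions are written as 1/3^n throughout.\<close>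
lemma powi_neg_three: "(3::real) powi (- int k) = 1 / 3^k"
  by (simp add: power_int_minus divide_inverse)

section \<open>Words\<close>

text \<open>A word of length n + r splits uniquely into a word of length n followed by a word
  of length r; this is the combinatorial side of self-similarity.\<close>

definition concat_word :: "nat \<Rightarrow> (nat \<Rightarrow> int) \<Rightarrow> (nat \<Rightarrow> int) \<Rightarrow> nat \<Rightarrow> int" where
  "concat_word n b d k = (if k \<le> n then b k else d (k - n))"

definition prefix_word :: "nat \<Rightarrow> (nat \<Rightarrow> int) \<Rightarrow> nat \<Rightarrow> int" where
  "prefix_word n g k = (if k \<le> n then g k else 0)"

definition suffix_word :: "nat \<Rightarrow> (nat \<Rightarrow> int) \<Rightarrow> nat \<Rightarrow> int" where
  "suffix_word n g k = (if k = 0 then 0 else g (k + n))"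

lemma Alph_at_0: "a \<in> Alph n \<Longrightarrow> a 0 = 0"
  by (auto simp: Alph_def)

lemma concat_word_Alph:
  assumes b: "b \<in> Alph n" and d: "d \<in> Alph r"
  shows "concat_word n b d \<in> Alph (n + r)"
  unfolding Alph_def mem_Collect_eq
proof (intro conjI allI ballI impI)
  fix k assume k: "k \<in> {1..n + r}"
  show "concat_word n b d k \<in> {-1, 0, 1}"
  proof (cases "k \<le> n")
    case True
    then show ?thesis using k b unfolding Alph_def concat_word_def by simp
  next
    case False
    then have "k - n \<in> {1..r}" using k by auto
    then show ?thesis using False d unfolding Alph_def concat_word_def by simp
  qed
next
  fix k assume k: "k \<notin> {1..n + r}"
  show "concat_word n b d k = 0"
  proof (cases "k \<le> n")
    case True
    then show ?thesis using k b unfolding Alph_def concat_word_def by simp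
  next
    case False
    then have "k - n \<notin> {1..r}" using k by auto
    then show ?thesis using False d unfolding Alph_def concat_word_def by simp
  qed
qed

lemma prefix_word_Alph: "g \<in> Alph (n + r) \<Longrightarrow> prefix_word n g \<in> Alph n"
  unfolding Alph_def prefix_word_def by auto

lemma suffix_word_Alph: "g \<in> Alph (n + r) \<Longrightarrow> suffix_word n g \<in> Alph r"
  unfolding Alph_def suffix_word_def by auto

lemma concat_prefix_suffix: "g \<in> Alph m \<Longrightarrow> concat_word n (prefix_word n g) (suffix_word n g) = g"
  unfolding concat_word_def prefix_word_def suffix_word_def by (auto simp: fun_eq_iff Alph_at_0)

lemma concat_word_inj:
  assumes "b \<in> Alph n" "b' \<in> Alph n" "d \<in> Alph r" "d' \<in> Alph r"
    and eq: "concat_word n b d = concat_word n b' d'"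
  shows "b = b' \<and> d = d'"
proof
  show "b = b'"
  proof
    fix k
    show "b k = b' k"
    proof (cases "k \<le> n")
      case True
      then show ?thesis using fun_cong[OF eq, of k] by (simp add: concat_word_def)
    next
      case False
      then show ?thesis using assms(1,2) by (auto simp: Alph_def)
    qed
  qed
  show "d = d'"
  proof
    fix k
    show "d k = d' k"
    proof (cases "k = 0")
      case True
      then show ?thesis using Alph_at_0[OF assms(3)] Alph_at_0[OF assms(4)] by simp
    next
      case False
      then show ?thesis using fun_cong[OF eq, of "k + n"] by (simp add: concat_word_def)
    qed
  qed
qed

lemma inj_on_concat_word:
  assumes "S \<subseteq> Alph n"
  shows "inj_on (\<lambda>(b, d). concat_word n b d) (S \<times> Alph r)"
proof (rule inj_onI, clarify)
  fix b d b' d'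
  assume "b \<in> S" "d \<in> Alph r" "b' \<in> S" "d' \<in> Alph r" "concat_word n b d = concat_word n b' d'"
  then show "b = b' \<and> d = d'" using concat_word_inj assms by blast
qed

lemma Alph_split: "Alph (n + r) = (\<lambda>(b, d). concat_word n b d) ` (Alph n \<times> Alph r)"
proof
  show "Alph (n + r) \<subseteq> (\<lambda>(b, d). concat_word n b d) ` (Alph n \<times> Alph r)"
  proof
    fix g assume g: "g \<in> Alph (n + r)"
    then show "g \<in> (\<lambda>(b, d). concat_word n b d) ` (Alph n \<times> Alph r)"
      using concat_prefix_suffix[OF g, of n] prefix_word_Alph[OF g] suffix_word_Alph[OF g]
      by (metis (no_types, lifting) SigmaI case_prod_conv image_eqI)
  qed
qed (auto intro: concat_word_Alph)

lemma Alph_one: "Alph 1 = (\<lambda>v k. if k = 1 then v else 0) ` {-1, 0, 1}"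
  unfolding Alph_def by (auto simp: fun_eq_iff image_iff) (metis One_nat_def)+

lemma card_Alph_one: "card (Alph 1) = 3"
proof -
  have "inj_on (\<lambda>v::int. \<lambda>k::nat. if k = 1 then v else 0) {-1, 0, 1}"
    by (auto simp: inj_on_def fun_eq_iff)
  then show ?thesis
    unfolding Alph_one by (subst card_image) auto
qed

lemma card_Alph: "card (Alph n) = 3 ^ n"
proof (induction n)
  case 0
  have "Alph 0 = {\<lambda>_. 0}" unfolding Alph_def by auto
  then show ?case by simp
next
  case (Suc n)
  have "card (Alph (n + 1)) = card (Alph n) * card (Alph 1)"
    unfolding Alph_split[of n 1]
    by (simp add: card_image[OF inj_on_concat_word] card_cartesian_product)
  then show ?case using Suc.IH card_Alph_one by simp
qed

lemma finite_Alph: "finite (Alph n)"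
  using card_Alph[of n] card.infinite by fastforce

lemma Alph_nonempty: "Alph n \<noteq> {}"
  using card_Alph[of n] by auto

lemma zpt_eq: "zpt n a = (\<Sum>k=1..n. complex_of_real (1/3^k) *
    exp (\<i> * complex_of_real (pi * (1/2 + 2/3 * real_of_int (a k)))))"
  unfolding zpt_def powi_neg_three by simp

lemma zpt_concat:
  assumes "b \<in> Alph n" "d \<in> Alph r"
  shows "zpt (n + r) (concat_word n b d) = zpt n b + complex_of_real (1/3^n) * zpt r d"
proof -
  define f where "f = (\<lambda>a k. complex_of_real (1/3^k) *
      exp (\<i> * complex_of_real (pi * (1/2 + 2/3 * real_of_int (a k)))))"
  have "zpt (n + r) (concat_word n b d) = (\<Sum>k=1..n+r. f (concat_word n b d) k)"
    unfolding zpt_eq f_def ..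
  also have "\<dots> = (\<Sum>k=1..n. f (concat_word n b d) k) + (\<Sum>k=n+1..n+r. f (concat_word n b d) k)"
    by (rule sum.ub_add_nat) simp
  also have "(\<Sum>k=1..n. f (concat_word n b d) k) = (\<Sum>k=1..n. f b k)"
    by (rule sum.cong) (auto simp: f_def concat_word_def)
  also have "(\<Sum>k=n+1..n+r. f (concat_word n b d) k) = (\<Sum>j=1..r. f (concat_word n b d) (j + n))"
    using sum.shift_bounds_cl_nat_ivl[of "f (concat_word n b d)" 1 n r] by (simp add: add.commute)
  also have "\<dots> = (\<Sum>j=1..r. complex_of_real (1/3^n) * f d j)"
    by (rule sum.cong) (auto simp: f_def concat_word_def power_add)
  also have "\<dots> = complex_of_real (1/3^n) * zpt r d"
    unfolding zpt_eq f_def by (simp add: sum_distrib_left)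
  finally show ?thesis unfolding zpt_eq f_def by simp
qed

lemma sum_inverse_powers_three: "(\<Sum>k=1..n. (1::real) / 3^k) = (1 - 1/3^n) / 2"
proof (induction n)
  case (Suc n)
  have "(\<Sum>k=1..Suc n. (1::real) / 3^k) = (1 - 1/3^n) / 2 + 1/3^Suc n"
    using Suc.IH by simp
  also have "\<dots> = (1 - 1/3^Suc n) / 2"
    by (simp add: field_simps)
  finally show ?case .
qed simp

lemma norm_zpt_le: "cmod (zpt n a) \<le> (1 - 1/3^n) / 2"
proof -
  have "cmod (zpt n a) \<le> (\<Sum>k=1..n. cmod (complex_of_real (1/3^k) *
      exp (\<i> * complex_of_real (pi * (1/2 + 2/3 * real_of_int (a k))))))"
    unfolding zpt_eq by (rule norm_sum)
  also have "\<dots> = (\<Sum>k=1..n. (1::real) / 3^k)"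
    by (rule sum.cong) (simp_all only: norm_mult norm_of_real norm_exp_i_times, simp)
  finally show ?thesis using sum_inverse_powers_three[of n] by linarith
qed

lemma proj_add_scaled: "proj \<theta> (z + complex_of_real c * w) = proj \<theta> z + c * proj \<theta> w"
  unfolding proj_def by (simp add: distrib_right mult.assoc)

lemma abs_proj_le: "\<bar>proj \<theta> w\<bar> \<le> cmod w"
proof -
  have "cmod (exp (- \<i> * complex_of_real \<theta>)) = 1"
    using norm_exp_i_times[of "- \<theta>"] by simp
  then show ?thesis
    unfolding proj_def using abs_Re_le_cmod[of "w * exp (- \<i> * complex_of_real \<theta>)"]
    by (simp add: norm_mult)
qed

lemma proj_ball: "proj \<theta> ` ball z \<rho> = ball (proj \<theta> z) \<rho>"
proof
  show "proj \<theta> ` ball z \<rho> \<subseteq> ball (proj \<theta> z) \<rho>"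
  proof
    fix t assume "t \<in> proj \<theta> ` ball z \<rho>"
    then obtain w where w: "w \<in> ball z \<rho>" "t = proj \<theta> w" by auto
    have "proj \<theta> z - proj \<theta> w = proj \<theta> (z - w)"
      unfolding proj_def by (simp add: left_diff_distrib)
    then have "\<bar>proj \<theta> z - proj \<theta> w\<bar> \<le> cmod (z - w)"
      using abs_proj_le by metis
    then show "t \<in> ball (proj \<theta> z) \<rho>" using w by (simp add: dist_norm dist_real_def)
  qed
  show "ball (proj \<theta> z) \<rho> \<subseteq> proj \<theta> ` ball z \<rho>"
  proof
    fix t assume t: "t \<in> ball (proj \<theta> z) \<rho>"
    define w where "w = z + complex_of_real (t - proj \<theta> z) * exp (\<i> * complex_of_real \<theta>)"
    have "exp (\<i> * complex_of_real \<theta>) * exp (- \<i> * complex_of_real \<theta>) = 1"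
      by (simp add: exp_add[symmetric])
    then have "proj \<theta> w = t"
      unfolding w_def proj_def by (simp add: distrib_right mult.assoc)
    moreover have "cmod (z - w) = \<bar>t - proj \<theta> z\<bar>"
      unfolding w_def by (simp add: norm_mult del: of_real_diff)
    moreover have "w \<in> ball z \<rho>"
      using t \<open>cmod (z - w) = \<bar>t - proj \<theta> z\<bar>\<close>
      by (simp add: dist_norm dist_real_def abs_minus_commute)
    ultimately show "t \<in> proj \<theta> ` ball z \<rho>" by (metis image_eqI)
  qed
qed

definition proj_pt :: "real \<Rightarrow> nat \<Rightarrow> (nat \<Rightarrow> int) \<Rightarrow> real" where
  "proj_pt \<theta> n a = proj \<theta> (zpt n a)"

lemma proj_pt_concat:
  "b \<in> Alph n \<Longrightarrow> d \<in> Alph r \<Longrightarrow>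
    proj_pt \<theta> (n + r) (concat_word n b d) = proj_pt \<theta> n b + (1/3^n) * proj_pt \<theta> r d"
  unfolding proj_pt_def by (simp add: zpt_concat proj_add_scaled del: of_real_divide)

lemma abs_proj_pt_le: "\<bar>proj_pt \<theta> n a\<bar> \<le> (1 - 1/3^n) / 2"
  unfolding proj_pt_def using abs_proj_le norm_zpt_le order_trans by blast

section \<open>The projected set and its self-similar copies\<close>

definition Pset :: "real \<Rightarrow> nat \<Rightarrow> real set" where
  "Pset \<theta> r = (\<Union>a\<in>Alph r. ball (proj_pt \<theta> r a) (1/3^r))"

lemma proj_Gset: "proj \<theta> ` Gset r = Pset \<theta> r"
  unfolding Gset_def Pset_def image_UN powi_neg_three proj_ball proj_pt_def ..

text \<open>P(r) lies in (-1, 1); in particular |P(r)| <= 2, the starting value of the iteration.\<close>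
lemma Pset_subset_ball: "Pset \<theta> r \<subseteq> ball 0 1"
proof
  fix t assume "t \<in> Pset \<theta> r"
  then obtain a where "\<bar>t - proj_pt \<theta> r a\<bar> < 1/3^r"
    unfolding Pset_def by (auto simp: dist_real_def abs_minus_commute)
  moreover have "\<bar>proj_pt \<theta> r a\<bar> \<le> (1 - 1/3^r) / 2" by (rule abs_proj_pt_le)
  moreover have "(1::real) / 3^r \<le> 1" by simp
  ultimately show "t \<in> ball 0 1" by (simp add: dist_real_def)
qed

lemma Pset_open: "open (Pset \<theta> r)"
  unfolding Pset_def by auto

lemma Pset_bounded: "bounded (Pset \<theta> r)"
  using Pset_subset_ball bounded_ball bounded_subset by blast

lemma Pset_lmeasurable: "Pset \<theta> r \<in> lmeasurable"
  using Pset_open Pset_bounded lmeasurable_open by blast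

lemma Pset_nonempty: "Pset \<theta> r \<noteq> {}"
proof -
  obtain a where "a \<in> Alph r" using Alph_nonempty by blast
  moreover have "proj_pt \<theta> r a \<in> ball (proj_pt \<theta> r a) (1/3^r)" by simp
  ultimately show ?thesis unfolding Pset_def by blast
qed

lemma measure_Pset_le_2: "measure lebesgue (Pset \<theta> r) \<le> 2"
proof -
  have "measure lebesgue (Pset \<theta> r) \<le> measure lebesgue (ball (0::real) 1)"
    by (rule measure_mono_fmeasurable[OF Pset_subset_ball]) (use Pset_lmeasurable in auto)
  then show ?thesis by (simp add: ball_eq_greaterThanLessThan)
qed

definition copy :: "real \<Rightarrow> nat \<Rightarrow> nat \<Rightarrow> (nat \<Rightarrow> int) \<Rightarrow> real set" where
  "copy \<theta> N r g = (\<lambda>x. (1/3^N) *\<^sub>R x + proj_pt \<theta> N g) ` Pset \<theta> r"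

lemma copy_lmeasurable: "copy \<theta> N r g \<in> lmeasurable"
proof (rule lmeasurable_open)
  have copy_eq: "copy \<theta> N r g = (\<lambda>x. proj_pt \<theta> N g + (1/3^N) *\<^sub>R x) ` Pset \<theta> r"
    unfolding copy_def by (simp add: add.commute)
  show "open (copy \<theta> N r g)"
    unfolding copy_eq using Pset_open by (rule open_affinity) simp
  have "bounded ((\<lambda>x. proj_pt \<theta> N g + x) ` ((\<lambda>x. (1/3^N) *\<^sub>R x) ` Pset \<theta> r))"
    by (intro bounded_translation bounded_scaling Pset_bounded)
  then show "bounded (copy \<theta> N r g)"
    unfolding copy_eq image_image .
qed

lemma copy_nonempty: "copy \<theta> N r g \<noteq> {}"
  unfolding copy_def using Pset_nonempty by auto

lemma measure_copy: "measure lebesgue (copy \<theta> N r g) = measure lebesgue (Pset \<theta> r) / 3^N"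
  unfolding copy_def using measure_lebesgue_affine[of "1/3^N" "proj_pt \<theta> N g" "Pset \<theta> r"] by simp

lemma Pset_subset_copies: "Pset \<theta> (N + r) \<subseteq> (\<Union>g\<in>Alph N. copy \<theta> N r g)"
proof
  fix t assume "t \<in> Pset \<theta> (N + r)"
  then obtain a where a: "a \<in> Alph (N + r)" "\<bar>t - proj_pt \<theta> (N + r) a\<bar> < 1/3^(N + r)"
    unfolding Pset_def by (auto simp: dist_real_def abs_minus_commute)
  obtain g d where gd: "g \<in> Alph N" "d \<in> Alph r" "a = concat_word N g d"
    using a(1) unfolding Alph_split[of N r] by auto
  define x where "x = 3^N * (t - proj_pt \<theta> N g)"
  have "\<bar>x - proj_pt \<theta> r d\<bar> = 3^N * \<bar>t - proj_pt \<theta> (N + r) a\<bar>"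
    unfolding x_def gd(3) proj_pt_concat[OF gd(1,2)] by (simp add: field_simps abs_mult)
  also have "\<dots> < 3^N * (1/3^(N + r))"
    using a(2) by (intro mult_strict_left_mono) auto
  also have "\<dots> = 1/3^r" by (simp add: power_add)
  finally have "x \<in> Pset \<theta> r"
    unfolding Pset_def using gd(2) by (auto simp: dist_real_def abs_minus_commute)
  moreover have "t = (1/3^N) *\<^sub>R x + proj_pt \<theta> N g" unfolding x_def by simp
  ultimately show "t \<in> (\<Union>g\<in>Alph N. copy \<theta> N r g)"
    unfolding copy_def using gd(1) by blast
qed

lemma copy_concat_subset:
  assumes "n \<le> N" "b \<in> Alph n" "d \<in> Alph (N - n)"
  shows "copy \<theta> N r (concat_word n b d) \<subseteq> ball (proj_pt \<theta> n b) (1/3^n)"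
proof
  fix t assume "t \<in> copy \<theta> N r (concat_word n b d)"
  then obtain x where x: "x \<in> Pset \<theta> r" "t = (1/3^N) * x + proj_pt \<theta> N (concat_word n b d)"
    unfolding copy_def by auto
  have N_split: "N = n + (N - n)" using assms(1) by simp
  have "proj_pt \<theta> N (concat_word n b d) = proj_pt \<theta> n b + (1/3^n) * proj_pt \<theta> (N - n) d"
    using proj_pt_concat[OF assms(2,3), of \<theta>] N_split by simp
  then have t_diff: "t - proj_pt \<theta> n b = (1/3^n) * proj_pt \<theta> (N - n) d + (1/3^N) * x"
    using x by simp
  have "\<bar>x\<bar> < 1" using x(1) Pset_subset_ball by fastforce
  then have x_term: "(1/3^N) * \<bar>x\<bar> < 1/3^N" by (simp add: divide_strict_right_mono)
  have d_term: "(1/3^n) * \<bar>proj_pt \<theta> (N - n) d\<bar> \<le> (1/3^n) * ((1 - 1/3^(N - n)) / 2)"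
    using abs_proj_pt_le by (intro mult_left_mono) auto
  have "\<bar>t - proj_pt \<theta> n b\<bar> \<le> (1/3^n) * \<bar>proj_pt \<theta> (N - n) d\<bar> + (1/3^N) * \<bar>x\<bar>"
    unfolding t_diff by (rule order_trans[OF abs_triangle_ineq]) (simp add: abs_mult)
  also have "\<dots> < (1/3^n) * ((1 - 1/3^(N - n)) / 2) + 1/3^N"
    using x_term d_term by linarith
  also have "\<dots> \<le> 1/3^n"
  proof -
    have "(3::real)^N = 3^n * 3^(N - n)" by (subst N_split) (simp add: power_add)
    then show ?thesis by (simp add: field_simps)
  qed
  finally show "t \<in> ball (proj_pt \<theta> n b) (1/3^n)"
    by (simp add: dist_real_def abs_minus_commute)
qed
section \<open>Heavy pairs and the one-step decay\<close>

definition cluster :: "real \<Rightarrow> nat \<Rightarrow> real \<Rightarrow> (nat \<Rightarrow> int) set" where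
  "cluster \<theta> n s = {b\<in>Alph n. \<bar>proj_pt \<theta> n b - s\<bar> < 1/3^n}"

lemma fmult_eq_card_cluster: "fmult n \<theta> s = card (cluster \<theta> n s)"
  unfolding fmult_def cluster_def proj_pt_def powi_neg_three ..

definition heavy :: "real \<Rightarrow> nat \<Rightarrow> real \<Rightarrow> (nat \<times> real) set" where
  "heavy \<theta> N K = {(n, s). n \<le> N \<and> K \<le> real (card (cluster \<theta> n s))}"

lemma heavy_iff: "i \<in> heavy \<theta> N K \<longleftrightarrow> fst i \<le> N \<and> K \<le> real (card (cluster \<theta> (fst i) (snd i)))"
  by (cases i) (simp add: heavy_def)

definition halo :: "nat \<times> real \<Rightarrow> real set" where
  "halo i = ball (snd i) (2/3^fst i)"

lemma measure_halo: "measure lebesgue (halo i) = 4 * (1/3^fst i)"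
  unfolding halo_def by (simp add: ball_eq_greaterThanLessThan)

text \<open>The superlevel set of the maximal multiplicity function is covered by the halos of
  the heavy pairs (each point is the centre of its own heavy pair).\<close>
lemma superlevel_subset_halos:
  "{s. K \<le> real (fstar N \<theta> s)} \<subseteq> (\<Union>i\<in>heavy \<theta> N K. halo i)"
proof
  fix s assume "s \<in> {s. K \<le> real (fstar N \<theta> s)}"
  then have K_le: "K \<le> real (fstar N \<theta> s)" by simp
  have range_eq: "{fmult n \<theta> s | n. n \<le> N} = (\<lambda>n. fmult n \<theta> s) ` {..N}" by auto
  have "fstar N \<theta> s \<in> (\<lambda>n. fmult n \<theta> s) ` {..N}"
    unfolding fstar_def range_eq by (rule Max_in) auto
  then obtain n where "n \<le> N" "fstar N \<theta> s = fmult n \<theta> s" by auto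
  then have "(n, s) \<in> heavy \<theta> N K"
    using K_le unfolding heavy_def fmult_eq_card_cluster by simp
  moreover have "s \<in> halo (n, s)" unfolding halo_def by simp
  ultimately show "s \<in> (\<Union>i\<in>heavy \<theta> N K. halo i)" by blast
qed

definition descendants :: "real \<Rightarrow> nat \<Rightarrow> nat \<times> real \<Rightarrow> (nat \<Rightarrow> int) set" where
  "descendants \<theta> N i =
     (\<lambda>(b, d). concat_word (fst i) b d) ` (cluster \<theta> (fst i) (snd i) \<times> Alph (N - fst i))"

lemma descendants_subset: "fst i \<le> N \<Longrightarrow> descendants \<theta> N i \<subseteq> Alph N"
  unfolding descendants_def cluster_def
  using concat_word_Alph[of _ "fst i" _ "N - fst i"] by fastforce

lemma descendants_UN_subset:
  assumes "C \<subseteq> heavy \<theta> N K"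
  shows "(\<Union>i\<in>C. descendants \<theta> N i) \<subseteq> Alph N"
proof (rule UN_least)
  fix i assume "i \<in> C"
  then have "fst i \<le> N" using assms by (auto simp: heavy_iff)
  then show "descendants \<theta> N i \<subseteq> Alph N" by (rule descendants_subset)
qed

lemma card_descendants:
  "card (descendants \<theta> N i) = card (cluster \<theta> (fst i) (snd i)) * 3^(N - fst i)"
proof -
  have "cluster \<theta> (fst i) (snd i) \<subseteq> Alph (fst i)" unfolding cluster_def by auto
  then show ?thesis
    unfolding descendants_def
    by (simp add: card_image[OF inj_on_concat_word] card_cartesian_product card_Alph)
qed

lemma copy_descendant_subset_halo:
  assumes "i \<in> heavy \<theta> N K" "g \<in> descendants \<theta> N i"
  shows "copy \<theta> N r g \<subseteq> halo i"
proof
  obtain n s where i: "i = (n, s)" by fastforce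
  then have "n \<le> N" using assms(1) unfolding heavy_iff by simp
  obtain b d where bd: "b \<in> cluster \<theta> n s" "d \<in> Alph (N - n)" "g = concat_word n b d"
    using assms(2) i unfolding descendants_def by auto
  then have b: "b \<in> Alph n" "\<bar>proj_pt \<theta> n b - s\<bar> < 1/3^n" unfolding cluster_def by auto
  fix t assume "t \<in> copy \<theta> N r g"
  then have "t \<in> ball (proj_pt \<theta> n b) (1/3^n)"
    using copy_concat_subset[OF \<open>n \<le> N\<close> b(1) bd(2)] bd(3) by blast
  then show "t \<in> halo i" using b(2) unfolding halo_def i by (simp add: dist_real_def)
qed

lemma descendants_disjoint:
  assumes "i \<in> heavy \<theta> N K" "j \<in> heavy \<theta> N K" "disjnt (halo i) (halo j)"
  shows "descendants \<theta> N i \<inter> descendants \<theta> N j = {}"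
proof (rule ccontr)
  assume "descendants \<theta> N i \<inter> descendants \<theta> N j \<noteq> {}"
  then obtain g where g: "g \<in> descendants \<theta> N i" "g \<in> descendants \<theta> N j" by blast
  obtain t where t: "t \<in> copy \<theta> N 0 g" using copy_nonempty by blast
  have "t \<in> halo i" using copy_descendant_subset_halo[OF assms(1) g(1)] t by blast
  moreover have "t \<in> halo j" using copy_descendant_subset_halo[OF assms(2) g(2)] t by blast
  ultimately show False using assms(3) unfolding disjnt_def by blast
qed

lemma separated_descendants_disjoint:
  assumes "C \<subseteq> heavy \<theta> N K" "pairwise (\<lambda>i j. disjnt (halo i) (halo j)) C"
  shows "disjoint_family_on (descendants \<theta> N) C"
  unfolding disjoint_family_on_def
proof (intro ballI impI)
  fix i j assume "i \<in> C" "j \<in> C" "i \<noteq> j"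
  then show "descendants \<theta> N i \<inter> descendants \<theta> N j = {}"
    using assms descendants_disjoint[of i \<theta> N K j] unfolding pairwise_def by blast
qed

text \<open>A family of heavy pairs with disjoint halos is finite, since the descendant sets
  are disjoint, nonempty (K >= 1) and contained in the finite set of words of length N.\<close>
lemma finite_separated_heavy:
  assumes "K \<ge> 1" "C \<subseteq> heavy \<theta> N K" "pairwise (\<lambda>i j. disjnt (halo i) (halo j)) C"
  shows "finite C"
proof (rule ccontr)
  assume "infinite C"
  moreover have "descendants \<theta> N i \<noteq> {}" if "i \<in> C" for i
  proof -
    have "K \<le> real (card (cluster \<theta> (fst i) (snd i)))"
      using that assms(2) by (auto simp: heavy_iff)
    then have "cluster \<theta> (fst i) (snd i) \<noteq> {}" using assms(1) by auto
    then show ?thesis unfolding descendants_def using Alph_nonempty by simp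
  qed
  moreover have "disjoint_family_on (descendants \<theta> N) C"
    using separated_descendants_disjoint[OF assms(2,3)] .
  ultimately have "infinite (\<Union>i\<in>C. descendants \<theta> N i)"
    by (rule infinite_disjoint_family_imp_infinite_UNION)
  moreover have "(\<Union>i\<in>C. descendants \<theta> N i) \<subseteq> Alph N"
    using assms(2) by (rule descendants_UN_subset)
  ultimately show False using finite_Alph finite_subset by blast
qed

lemma card_free_words:
  assumes "C \<subseteq> heavy \<theta> N K" "finite C" "pairwise (\<lambda>i j. disjnt (halo i) (halo j)) C"
  shows "real (card (Alph N - (\<Union>i\<in>C. descendants \<theta> N i)))
           \<le> 3^N * (1 - K * (\<Sum>i\<in>C. 1/3^fst i))"
proof -
  define U where "U = (\<Union>i\<in>C. descendants \<theta> N i)"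
  have U_sub: "U \<subseteq> Alph N" unfolding U_def using assms(1) by (rule descendants_UN_subset)
  have card_U: "card U = (\<Sum>i\<in>C. card (descendants \<theta> N i))"
    unfolding U_def
  proof (rule card_UN_disjoint'[OF separated_descendants_disjoint[OF assms(1,3)] _ assms(2)])
    fix i assume "i \<in> C"
    then have "descendants \<theta> N i \<subseteq> Alph N" using descendants_UN_subset[OF assms(1)] by blast
    then show "finite (descendants \<theta> N i)" using finite_Alph by (rule finite_subset)
  qed
  have "3^N * (K * (\<Sum>i\<in>C. 1/3^fst i)) = (\<Sum>i\<in>C. K * 3^(N - fst i))"
    unfolding sum_distrib_left
  proof (rule sum.cong)
    fix i assume "i \<in> C"
    then have "fst i \<le> N" using assms(1) by (auto simp: heavy_iff)
    then have "(3::real)^N = 3^fst i * 3^(N - fst i)" by (metis le_add_diff_inverse power_add)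
    then show "3^N * (K * (1/3^fst i)) = K * 3^(N - fst i)" by simp
  qed simp
  also have "\<dots> \<le> (\<Sum>i\<in>C. real (card (cluster \<theta> (fst i) (snd i))) * 3^(N - fst i))"
    using assms(1) by (intro sum_mono mult_right_mono) (auto simp: heavy_iff)
  also have "\<dots> = real (card U)"
    unfolding card_U of_nat_sum by (rule sum.cong) (simp_all add: card_descendants)
  finally have U_large: "3^N * (K * (\<Sum>i\<in>C. 1/3^fst i)) \<le> real (card U)" .
  have "real (card (Alph N - U)) = 3^N - real (card U)"
    using card_Diff_subset[OF finite_subset[OF U_sub finite_Alph] U_sub] card_mono[OF finite_Alph U_sub]
    by (simp add: card_Alph of_nat_diff)
  then show ?thesis
    using U_large unfolding U_def by (simp add: right_diff_distrib)
qed

lemma Pset_subset_halos_copies: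
  assumes "C \<subseteq> heavy \<theta> N K"
  shows "Pset \<theta> (N + r) \<subseteq> (\<Union>i\<in>C. halo i) \<union>
           (\<Union>g\<in>Alph N - (\<Union>i\<in>C. descendants \<theta> N i). copy \<theta> N r g)"
proof
  fix t assume "t \<in> Pset \<theta> (N + r)"
  then obtain g where g: "g \<in> Alph N" "t \<in> copy \<theta> N r g"
    using Pset_subset_copies by blast
  show "t \<in> (\<Union>i\<in>C. halo i) \<union> (\<Union>g\<in>Alph N - (\<Union>i\<in>C. descendants \<theta> N i). copy \<theta> N r g)"
  proof (cases "g \<in> (\<Union>i\<in>C. descendants \<theta> N i)")
    case True
    then obtain i where "i \<in> C" "g \<in> descendants \<theta> N i" by blast
    then have "t \<in> halo i" using copy_descendant_subset_halo assms g(2) by blast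
    then show ?thesis using \<open>i \<in> C\<close> by blast
  next
    case False
    then show ?thesis using g by blast
  qed
qed

lemma measure_Pset_decay:
  fixes r :: nat
  assumes C: "C \<subseteq> heavy \<theta> N K" "finite C" "pairwise (\<lambda>i j. disjnt (halo i) (halo j)) C"
  defines "L \<equiv> measure lebesgue (Pset \<theta> r)" and "\<sigma> \<equiv> (\<Sum>i\<in>C. 1/3^fst i)"
  shows "measure lebesgue (Pset \<theta> (N + r)) \<le> L - (K * L - 4) * \<sigma>"
proof -
  define R where "R = Alph N - (\<Union>i\<in>C. descendants \<theta> N i)"
  have finR: "finite R" unfolding R_def using finite_Alph by simp
  have halos: "(\<Union>i\<in>C. halo i) \<in> fmeasurable lebesgue"
    using C(2) by (intro fmeasurable.finite_UN) (auto simp: halo_def)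
  have copies: "(\<Union>g\<in>R. copy \<theta> N r g) \<in> fmeasurable lebesgue"
    using finR by (intro fmeasurable.finite_UN) (auto simp: copy_lmeasurable)
  have "measure lebesgue (Pset \<theta> (N + r))
          \<le> measure lebesgue ((\<Union>i\<in>C. halo i) \<union> (\<Union>g\<in>R. copy \<theta> N r g))"
    using Pset_subset_halos_copies[OF C(1)] Pset_lmeasurable halos copies unfolding R_def
    by (intro measure_mono_fmeasurable) auto
  also have "\<dots> \<le> measure lebesgue (\<Union>i\<in>C. halo i) + measure lebesgue (\<Union>g\<in>R. copy \<theta> N r g)"
    using halos copies by (intro measure_Un_le) auto
  also have "measure lebesgue (\<Union>i\<in>C. halo i) \<le> (\<Sum>i\<in>C. measure lebesgue (halo i))"
    using C(2) by (intro measure_UNION_le) (auto simp: halo_def)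
  also have "\<dots> = 4 * \<sigma>" unfolding \<sigma>_def measure_halo sum_distrib_left ..
  also have "measure lebesgue (\<Union>g\<in>R. copy \<theta> N r g) \<le> (\<Sum>g\<in>R. measure lebesgue (copy \<theta> N r g))"
    using finR by (intro measure_UNION_le) (auto simp: copy_lmeasurable fmeasurableD)
  also have "\<dots> = real (card R) * (L / 3^N)" by (simp add: measure_copy L_def)
  also have "\<dots> \<le> 3^N * (1 - K * \<sigma>) * (L / 3^N)"
    using card_free_words[OF C] unfolding R_def \<sigma>_def L_def by (intro mult_right_mono) auto
  finally show ?thesis by (simp add: algebra_simps)
qed

section \<open>Iterating the decay\<close>

text \<open>Indeed, while K x_j exceeds 2c each step removes at least (K x_m / 2) sigma.\<close>
lemma decaying_sequence_bound:
  fixes x :: "nat \<Rightarrow> real"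
  assumes dec: "\<And>j. x (Suc j) \<le> x j"
    and step: "\<And>j. x (Suc j) \<le> x j - (K * x j - c) * \<sigma>"
    and "x 0 \<le> a" "0 \<le> x m" "0 \<le> K" "0 \<le> \<sigma>" "0 < \<delta>" "\<delta> \<le> real m * \<sigma>"
  shows "K * x m \<le> max (2 * c) (2 * a / \<delta>)"
proof (rule ccontr)
  assume "\<not> ?thesis"
  then have big_c: "2 * c < K * x m" and big_a: "2 * a / \<delta> < K * x m" by auto
  have "decseq x" using dec by (rule decseq_SucI)
  define q where "q = (K * x m / 2) * \<sigma>"
  have drop: "x (Suc j) \<le> x j - q" if "j < m" for j
  proof -
    have "x m \<le> x j" using decseqD[OF \<open>decseq x\<close>, of j m] that by simp
    then have "K * x m \<le> K * x j" using \<open>0 \<le> K\<close> by (rule mult_left_mono)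
    then have "K * x m / 2 \<le> K * x j - c" using big_c by linarith
    then have "q \<le> (K * x j - c) * \<sigma>" unfolding q_def using \<open>0 \<le> \<sigma>\<close> by (rule mult_right_mono)
    then show ?thesis using step[of j] by linarith
  qed
  have iterate: "x j \<le> x 0 - real j * q" if "j \<le> m" for j
    using that
  proof (induction j)
    case (Suc j)
    have "x j \<le> x 0 - real j * q" using Suc by simp
    moreover have "x (Suc j) \<le> x j - q" using drop Suc.prems by simp
    ultimately show ?case by (simp add: algebra_simps)
  qed simp
  have "real m * q \<le> a" using iterate[of m] \<open>x 0 \<le> a\<close> \<open>0 \<le> x m\<close> by linarith
  moreover have "\<delta> * (K * x m / 2) \<le> real m * \<sigma> * (K * x m / 2)"
    using \<open>\<delta> \<le> real m * \<sigma>\<close> \<open>0 \<le> K\<close> \<open>0 \<le> x m\<close> by (intro mult_right_mono) auto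
  moreover have "real m * \<sigma> * (K * x m / 2) = real m * q" unfolding q_def by simp
  ultimately have "\<delta> * (K * x m) \<le> 2 * a" by linarith
  then have "K * x m \<le> 2 * a / \<delta>" using \<open>0 < \<delta>\<close> by (simp add: pos_le_divide_eq mult.commute)
  then show False using big_a by simp
qed

text \<open>Vitali's covering lemma (with dilation 5) selects separated heavy pairs whose halos
  carry at least one twentieth of the measure of the superlevel set.\<close>
lemma separated_heavy_family:
  assumes "K \<ge> 1"
  obtains C where "C \<subseteq> heavy \<theta> N K" "finite C" "pairwise (\<lambda>i j. disjnt (halo i) (halo j)) C"
    and "measure lebesgue {s. K \<le> real (fstar N \<theta> s)} \<le> 20 * (\<Sum>i\<in>C. 1/3^fst i)"
proof -
  define E where "E = {s. K \<le> real (fstar N \<theta> s)}"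
  have cover: "E \<subseteq> (\<Union>i\<in>heavy \<theta> N K. ball (snd i) (2/3^fst i))"
    using superlevel_subset_halos unfolding E_def halo_def .
  have radii: "0 < (2::real)/3^fst i \<and> (2::real)/3^fst i \<le> 2" for i :: "nat \<times> real"
    using one_le_power[of "3::real" "fst i"] by (simp add: divide_le_eq)
  obtain C where "countable C" and C: "C \<subseteq> heavy \<theta> N K"
      "pairwise (\<lambda>i j. disjnt (ball (snd i) (2/3^fst i)) (ball (snd j) (2/3^fst j))) C"
      "E \<subseteq> (\<Union>i\<in>C. ball (snd i) (5 * (2/3^fst i)))"
    by (rule Vitali_covering_lemma_balls[OF cover radii])
  have sep: "pairwise (\<lambda>i j. disjnt (halo i) (halo j)) C" using C(2) unfolding halo_def .
  have fin: "finite C" using finite_separated_heavy[OF assms C(1) sep] .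
  have balls: "(\<Union>i\<in>C. ball (snd i) (5 * (2/3^fst i))) \<in> fmeasurable lebesgue"
    using fin by (intro fmeasurable.finite_UN) auto
  have "measure lebesgue E \<le> (\<Sum>i\<in>C. 1/3^fst i) * 20"
  proof (cases "E \<in> sets lebesgue")
    case True
    have "measure lebesgue E \<le> measure lebesgue (\<Union>i\<in>C. ball (snd i) (5 * (2/3^fst i)))"
      using C(3) True balls by (rule measure_mono_fmeasurable)
    also have "\<dots> \<le> (\<Sum>i\<in>C. measure lebesgue (ball (snd i) (5 * (2/3^fst i))))"
      using fin by (intro measure_UNION_le) auto
    also have "\<dots> = (\<Sum>i\<in>C. 1/3^fst i) * 20"
      by (simp add: ball_eq_greaterThanLessThan sum_distrib_right)
    finally show ?thesis .
  next
    case False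
    then show ?thesis by (simp add: measure_notin_sets sum_nonneg)
  qed
  then show ?thesis using that C(1) fin sep unfolding E_def by (simp add: mult.commute)
qed

lemma measure_Pset_bound:
  assumes K: "K \<ge> 1"
    and dense: "K powr (- \<beta>) \<le> measure lebesgue {s. K \<le> real (fstar N \<theta> s)}"
  shows "measure lebesgue (Pset \<theta> (N * nat \<lceil>K powr \<beta>\<rceil>)) \<le> 80 / K"
proof -
  obtain C where C: "C \<subseteq> heavy \<theta> N K" "finite C" "pairwise (\<lambda>i j. disjnt (halo i) (halo j)) C"
    and E: "measure lebesgue {s. K \<le> real (fstar N \<theta> s)} \<le> 20 * (\<Sum>i\<in>C. 1/3^fst i)"
    using separated_heavy_family[OF K] by blast
  define \<sigma> where "\<sigma> = (\<Sum>i\<in>C. (1::real)/3^fst i)"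
  define x where "x j = measure lebesgue (Pset \<theta> (N * j))" for j
  define m where "m = nat \<lceil>K powr \<beta>\<rceil>"
  have step: "x (Suc j) \<le> x j - (K * x j - 4) * \<sigma>" for j
    using measure_Pset_decay[OF C, of "N * j"] unfolding x_def \<sigma>_def by (simp add: mult_Suc_right)
  \<comment> \<open>the empty family turns the decay estimate into monotonicity\<close>
  have dec: "x (Suc j) \<le> x j" for j
    using measure_Pset_decay[of "{}" \<theta> N K "N * j"] unfolding x_def by (simp add: mult_Suc_right)
  have m_ge: "K powr \<beta> \<le> real m"
  proof -
    have "0 < K powr \<beta>" using K by simp
    then have "0 \<le> \<lceil>K powr \<beta>\<rceil>" unfolding zero_le_ceiling by linarith
    then show ?thesis unfolding m_def using le_of_int_ceiling by simp
  qed
  have "K powr (- \<beta>) \<le> 20 * \<sigma>" using dense E unfolding \<sigma>_def by linarith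
  have "1 = K powr \<beta> * K powr (- \<beta>)" using K by (simp add: powr_add[symmetric])
  also have "\<dots> \<le> real m * (20 * \<sigma>)"
    using m_ge \<open>K powr (- \<beta>) \<le> 20 * \<sigma>\<close> by (intro mult_mono) auto
  finally have "1/20 \<le> real m * \<sigma>" by simp
  moreover have "0 \<le> \<sigma>" unfolding \<sigma>_def by (intro sum_nonneg) auto
  ultimately have "K * x m \<le> max (2 * 4) (2 * 2 / (1/20))"
    using K measure_Pset_le_2 dec step
    by (intro decaying_sequence_bound[where x = x]) (auto simp: x_def)
  then show ?thesis unfolding x_def m_def using K by (simp add: field_simps)
qed

theorem theorem7:
  fixes \<beta> :: real
  assumes "\<beta> > 2"
  shows "\<exists>C::real. \<forall>N::nat. \<forall>\<theta>::real. \<forall>K::real.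
     N \<ge> 1 \<and> 0 \<le> \<theta> \<and> \<theta> < pi \<and> K \<ge> 1 \<and>
     measure lebesgue {s::real. real (fstar N \<theta> s) \<ge> K} \<ge> K powr (- \<beta>)
     \<longrightarrow> measure lebesgue (proj \<theta> ` Gset (N * nat \<lceil>K powr \<beta>\<rceil>)) \<le> C / K"
proof (intro exI[of _ 80] allI impI)
  fix N :: nat and \<theta> K :: real
  assume "N \<ge> 1 \<and> 0 \<le> \<theta> \<and> \<theta> < pi \<and> K \<ge> 1 \<and>
     measure lebesgue {s::real. real (fstar N \<theta> s) \<ge> K} \<ge> K powr (- \<beta>)"
  then show "measure lebesgue (proj \<theta> ` Gset (N * nat \<lceil>K powr \<beta>\<rceil>)) \<le> 80 / K"
    unfolding proj_Gset using measure_Pset_bound[of K \<beta> N \<theta>] by simp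
qed

end
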